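(* Let $T_l$ be a $2m$ deck-shuffler IET and let $H_l:[0,1)\to[0,1)$, $H_l(x)=\sum_{n=0}^\infty \chi_B(T_l^n x)/2^{n+1}$, and $\mu_l=(H_l)_*\mathrm{Leb}$. Then: (a) $E_2\circ H_l=H_l\circ T_l$ on $[0,1)$; (b) $\mu_l$ is $E_2$-invariant (more generally $(H_l)_*\nu$ is $E_2$-invariant for every $T_l$-invariant Borel probability measure $\nu$); (c) $H_l$ is right-continuous; (d) $H_l$ is non-decreasing; (e) for $z\in[0,1)$, $\mu_l(\{z\})>0$ if and only if $H_l^{-1}(\{z\})$ is an interval of positive length; in that case there is a positive integer $n$ with $T_l^n(x)=x$ for all $x\in H_l^{-1}(\{z\})$. Conversely, if $a<b$ and there is a positive integer $n$ with $T_l^n(x)=x$ for all $x\in[a,b]$, then $H_l([a,b])$ is a finite set; (f) if $T_l$ is minimal, then $H_l$ is strictly increasing, and hence is an injective right-continuous map intertwining $T_l$ with $E_2$.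
   Context: $E_2(x)=2x\bmod1$ on $[0,1)\cong\mathbb{R}/\mathbb{Z}$. A $2m$ deck-shuffler IET $T_l$ is the map $[0,1)\to[0,1)$ determined by a length vector $l$ giving a partition of $[0,1)$ into consecutive left-closed right-open intervals $A_1<\dots<A_m<B_1<\dots<B_m$ of positive lengths, with $T_l(x)=x+|B_1|+\dots+|B_i|$ for $x\in A_i$ and $T_l(x)=x-|A_i|-\dots-|A_m|$ for $x\in B_i$. $B=B_1\cup\dots\cup B_m$, $\chi_B$ is its indicator function, and Leb is Lebesgue measure on $[0,1)$. $T_l$ is minimal if every orbit is dense in $[0,1)$. *)

theory Defs
  imports "HOL-Probability.Probability"
begin

text \<open>A 2m deck-shuffler IET. The length vector is l :: nat => real with entries
 l 0, ..., l (2m-1): l i = |A_(i+1)| for i < m and l (m+i) = |B_(i+1)| for i < m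
 (0-based indices below).\<close>

definition ds_valid :: "nat \<Rightarrow> (nat \<Rightarrow> real) \<Rightarrow> bool" where
  "ds_valid m l \<longleftrightarrow> m \<ge> 1 \<and> (\<forall>i<2*m. l i > 0) \<and> (\<Sum>i<2*m. l i) = 1"

definition ds_A :: "nat \<Rightarrow> (nat \<Rightarrow> real) \<Rightarrow> nat \<Rightarrow> real set" where
  "ds_A m l i = {(\<Sum>j<i. l j) ..< (\<Sum>j<Suc i. l j)}"

definition ds_B :: "nat \<Rightarrow> (nat \<Rightarrow> real) \<Rightarrow> nat \<Rightarrow> real set" where
  "ds_B m l i = {(\<Sum>j<m+i. l j) ..< (\<Sum>j<Suc (m+i). l j)}"

definition ds_Bset :: "nat \<Rightarrow> (nat \<Rightarrow> real) \<Rightarrow> real set" where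
  "ds_Bset m l = (\<Union>i<m. ds_B m l i)"

text \<open>The intervals are pairwise disjoint, so at most one summand
 is nonzero; outside [0,1) the map is the identity (irrelevant).\<close>
definition ds_T :: "nat \<Rightarrow> (nat \<Rightarrow> real) \<Rightarrow> real \<Rightarrow> real" where
  "ds_T m l x = x
     + (\<Sum>i<m. indicator (ds_A m l i) x * (\<Sum>j\<in>{m..m+i}. l j))
     - (\<Sum>i<m. indicator (ds_B m l i) x * (\<Sum>j\<in>{i..<m}. l j))"

definition ds_H :: "nat \<Rightarrow> (nat \<Rightarrow> real) \<Rightarrow> real \<Rightarrow> real" where
  "ds_H m l x = (\<Sum>n. indicator (ds_Bset m l) ((ds_T m l ^^ n) x) / 2 ^ (n + 1))"

definition E2 :: "real \<Rightarrow> real" where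
  "E2 x = frac (2 * x)"

definition Leb01 :: "real measure" where
  "Leb01 = restrict_space lborel {0..<1}"

definition ds_mu :: "nat \<Rightarrow> (nat \<Rightarrow> real) \<Rightarrow> real measure" where
  "ds_mu m l = distr Leb01 borel (ds_H m l)"

definition ds_orbit :: "nat \<Rightarrow> (nat \<Rightarrow> real) \<Rightarrow> real \<Rightarrow> real set" where
  "ds_orbit m l x = {y \<in> {0..<1}. \<exists>n. (ds_T m l ^^ n) x = y \<or> (ds_T m l ^^ n) y = x}"

definition ds_minimal :: "nat \<Rightarrow> (nat \<Rightarrow> real) \<Rightarrow> bool" where
  "ds_minimal m l \<longleftrightarrow> (\<forall>x\<in>{0..<1}. {0..<1} \<subseteq> closure (ds_orbit m l x))"

end

(*
  H_l x is the binary number whose n-th digit records whether T_l^n x lies in B, so doubling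
  mod 1 drops the first digit, which is (a), and pushing forward T_l-invariant measures gives (b).
  All of B lies to the right of its complement and T_l is increasing on B and on its
  complement; hence for x < y the itineraries agree until the first time where the orbit of x
  is outside B and that of y is inside, so H_l is monotone, and H_l x = H_l y forces
  T_l^n x < T_l^n y for all n. Points just right of x share long itinerary prefixes with x,
  which gives right continuity.
  An atom z of mu_l is E_2-periodic: the masses along its orbit never decrease, and at the first
  repetition of the (finite) orbit two atoms would merge. For the period p, T_l^p maps the level
  interval of z increasingly into itself and preserves Lebesgue measure, so it is the identity
  there. Conversely on n-periodic points H_l is a dyadic partial sum divided by 1 - 2^-n, which
  takes finitely many values. A minimal T_l has no periodic points, so H_l is injective.
*)
theory Submission
  imports Defs
begin

lemma Ico_chain_Union:
  fixes f :: "nat \<Rightarrow> 'a::linorder"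
  assumes "\<And>k. k < n \<Longrightarrow> f k \<le> f (Suc k)"
  shows "f 0 \<le> f n \<and> (\<Union>k<n. {f k..<f (Suc k)}) = {f 0..<f n}"
  using assms
proof (induction n)
  case (Suc n)
  then have "f 0 \<le> f n" "(\<Union>k<n. {f k..<f (Suc k)}) = {f 0..<f n}" "f n \<le> f (Suc n)"
    by auto
  then show ?case
    by (auto simp: lessThan_Suc)
qed simp

lemma Ico_chain_indicator:
  fixes f :: "nat \<Rightarrow> 'a::linorder"
  assumes "\<And>k. k < n \<Longrightarrow> f k \<le> f (Suc k)"
  shows "(\<Sum>k<n. indicator {f k..<f (Suc k)} x :: ennreal) = indicator {f 0..<f n} x"
  using assms
proof (induction n)
  case (Suc n)
  have "(\<Sum>k<Suc n. indicator {f k..<f (Suc k)} x :: ennreal) =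
      (\<Sum>k<n. indicator {f k..<f (Suc k)} x) + indicator {f n..<f (Suc n)} x"
    by (rule sum.lessThan_Suc)
  also have "\<dots> = indicator {f 0..<f n} x + indicator {f n..<f (Suc n)} x"
    by (subst Suc.IH) (use Suc.prems in auto)
  also have "\<dots> = indicator {f 0..<f (Suc n)} x"
  proof -
    have "f 0 \<le> f n" "f n \<le> f (Suc n)"
      using Suc.prems Ico_chain_Union[of n f] by auto
    then show ?thesis
      by (auto simp: indicator_def)
  qed
  finally show ?case .
qed simp

lemma mem_iff_indicator_sum:
  fixes n :: nat
  assumes "indicator X x = (\<Sum>k<n. indicator (S k) x :: ennreal)"
  shows "x \<in> X \<longleftrightarrow> (\<exists>k<n. x \<in> S k)"
proof
  assume "x \<in> X"
  then have "(\<Sum>k<n. indicator (S k) x :: ennreal) \<noteq> 0"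
    using assms by simp
  then show "\<exists>k<n. x \<in> S k"
    by (metis (no_types, lifting) indicator_simps(2) lessThan_iff sum.neutral)
next
  assume "\<exists>k<n. x \<in> S k"
  then obtain k where k: "k < n" "x \<in> S k"
    by blast
  then have "(1::ennreal) = indicator (S k) x"
    by simp
  also have "\<dots> \<le> (\<Sum>k<n. indicator (S k) x)"
    by (rule member_le_sum) (use k in auto)
  finally show "x \<in> X"
    using assms by (cases "x \<in> X") auto
qed

lemma eq_if_indicator_sum:
  fixes n :: nat
  assumes "indicator X x = (\<Sum>k<n. indicator (S k) x :: ennreal)" "k < n" "k' < n"
    "x \<in> S k" "x \<in> S k'"
  shows "k = k'"
proof (rule ccontr)
  assume "k \<noteq> k'"
  then have "(2::ennreal) = (\<Sum>j\<in>{k, k'}. indicator (S j) x)"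
    using assms(4,5) by simp
  also have "\<dots> \<le> (\<Sum>j<n. indicator (S j) x)"
    using assms(2,3) by (intro sum_mono2) auto
  also have "\<dots> \<le> 1"
    unfolding assms(1)[symmetric] by (simp add: indicator_def)
  finally show False
    by simp
qed

lemma eventually_at_right_translate:
  fixes p x :: real
  assumes "\<forall>\<^sub>F z in at_right p. P z"
  shows "\<forall>\<^sub>F y in at_right x. P (p + (y - x))"
proof -
  obtain b where "p < b" "\<And>z. p < z \<Longrightarrow> z < b \<Longrightarrow> P z"
    using assms unfolding eventually_at_right_field by blast
  then show ?thesis
    unfolding eventually_at_right_field by (intro exI[of _ "x + (b - p)"]) auto
qed

lemma inj_on_funpow:
  assumes "inj_on f A" "\<And>x. x \<in> A \<Longrightarrow> f x \<in> A"
  shows "inj_on (f ^^ n) A"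
proof (induction n)
  case (Suc n)
  have "(f ^^ n) ` A \<subseteq> A"
    by (induction n) (auto simp: assms(2))
  then have "inj_on (f \<circ> (f ^^ n)) A"
    using Suc assms(1) by (intro comp_inj_on) (auto intro: inj_on_subset)
  then show ?case
    by (simp add: o_def)
qed simp

lemma is_interval_level_set:
  fixes f :: "real \<Rightarrow> 'b::order"
  assumes "is_interval X" "mono_on X f"
  shows "is_interval {x \<in> X. f x = z}"
  unfolding is_interval_1
proof (intro ballI allI impI)
  fix a b x assume a: "a \<in> {x \<in> X. f x = z}" and b: "b \<in> {x \<in> X. f x = z}"
    and x: "a \<le> x \<and> x \<le> b"
  then have "x \<in> X"
    using assms(1) unfolding is_interval_1 by blast
  with a b x show "x \<in> {x \<in> X. f x = z}"
    using mono_onD[OF assms(2), of a x] mono_onD[OF assms(2), of x b] by auto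
qed

lemma funpow_first_repetition:
  assumes "finite (range (\<lambda>n. (f ^^ n) z))"
  obtains p where "0 < p" "(f ^^ p) z = z"
  | i j where "i < j" "(f ^^ i) z \<noteq> (f ^^ j) z" "(f ^^ Suc i) z = (f ^^ Suc j) z"
proof -
  have "\<not> inj (\<lambda>n. (f ^^ n) z)"
    using assms finite_imageD infinite_UNIV_nat by blast
  then have "\<exists>i. \<exists>j>i. (f ^^ i) z = (f ^^ j) z"
    unfolding inj_def by (metis linorder_neqE_nat)
  define i where "i = (LEAST i. \<exists>j>i. (f ^^ i) z = (f ^^ j) z)"
  obtain j where j: "i < j" "(f ^^ i) z = (f ^^ j) z"
    using LeastI_ex[OF \<open>\<exists>i. \<exists>j>i. (f ^^ i) z = (f ^^ j) z\<close>] unfolding i_def by blast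
  show thesis
  proof (cases i)
    case 0
    with j show thesis
      using that(1)[of j] by simp
  next
    case (Suc i')
    with j obtain j' where j': "j = Suc j'" "i' < j'"
      by (cases j) auto
    have "\<not> (\<exists>j>i'. (f ^^ i') z = (f ^^ j) z)"
      using not_less_Least[of i' "\<lambda>i. \<exists>j>i. (f ^^ i) z = (f ^^ j) z"] Suc unfolding i_def by simp
    with j' have "(f ^^ i') z \<noteq> (f ^^ j') z"
      by blast
    with j j' Suc show thesis
      using that(2)[of i' j'] by simp
  qed
qed

section \<open>Invariant measures and Lebesgue measure\<close>

lemma distr_funpow_eq:
  assumes f: "f \<in> M \<rightarrow>\<^sub>M M" and inv: "distr M M f = M"
  shows "distr M M (f ^^ n) = M"
proof (induction n)
  case (Suc n)
  have "distr M M (f ^^ Suc n) = distr M M (f ^^ n \<circ> f)"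
    by (simp only: funpow_Suc_right)
  also have "\<dots> = distr (distr M M f) M (f ^^ n)"
    by (rule distr_distr[OF measurable_compose_n[OF f] f, symmetric])
  also have "\<dots> = M"
    by (simp only: inv Suc)
  finally show ?case .
qed (simp add: distr_id2)

lemma distr_factor_invariant:
  assumes T: "T \<in> M \<rightarrow>\<^sub>M M" and inv: "distr M M T = M"
    and H: "H \<in> M \<rightarrow>\<^sub>M N" and g: "g \<in> N \<rightarrow>\<^sub>M N"
    and factor: "\<And>x. x \<in> space M \<Longrightarrow> g (H x) = H (T x)"
  shows "distr (distr M N H) N g = distr M N H"
proof -
  have "distr (distr M N H) N g = distr M N (g \<circ> H)"
    by (rule distr_distr[OF g H])
  also have "\<dots> = distr M N (H \<circ> T)"
    by (rule distr_cong) (auto simp: factor)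
  also have "\<dots> = distr (distr M M T) N H"
    by (rule distr_distr[OF H T, symmetric])
  finally show ?thesis
    by (simp add: inv)
qed

lemma emeasure_lborel_interval_pos_iff:
  fixes S :: "real set"
  assumes "is_interval S"
  shows "0 < emeasure lborel S \<longleftrightarrow> (\<exists>a\<in>S. \<exists>b\<in>S. a < b)"
proof
  assume pos: "0 < emeasure lborel S"
  show "\<exists>a\<in>S. \<exists>b\<in>S. a < b"
  proof (rule ccontr)
    assume "\<not> (\<exists>a\<in>S. \<exists>b\<in>S. a < b)"
    then have "S \<subseteq> {x}" if "x \<in> S" for x
      using that not_less_iff_gr_or_eq by blast
    then have "finite S"
      by (metis finite.emptyI finite.insertI finite_subset equals0I)
    then show False
      using pos null_setsD1[OF finite_imp_null_set_lborel[OF \<open>finite S\<close>]] by simp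
  qed
next
  assume "\<exists>a\<in>S. \<exists>b\<in>S. a < b"
  then obtain a b where "a \<in> S" "b \<in> S" "a < b"
    by blast
  then have "{a..b} \<subseteq> S"
    using assms unfolding is_interval_1 by (meson atLeastAtMost_iff subsetI)
  then have "emeasure lborel {a..b} \<le> emeasure lborel S"
    using real_interval_borel_measurable[OF assms] by (intro emeasure_mono) auto
  moreover have "0 < emeasure lborel {a..b}"
    using \<open>a < b\<close> by simp
  ultimately show "0 < emeasure lborel S"
    using order.strict_trans2 by blast
qed

context finite_measure
begin

lemma finite_if_measure_singleton_ge:
  assumes "\<And>x. x \<in> S \<Longrightarrow> {x} \<in> sets M" "\<And>x. x \<in> S \<Longrightarrow> c \<le> measure M {x}" "0 < c"
  shows "finite S"
proof (rule ccontr)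
  assume "infinite S"
  then obtain W where W: "finite W" "card W = nat \<lceil>measure M (space M) / c\<rceil> + 1" "W \<subseteq> S"
    using infinite_arbitrarily_large by blast
  have "real (card W) * c \<le> (\<Sum>w\<in>W. measure M {w})"
    using W(3) assms(2) by (auto intro!: sum_bounded_below)
  also have "\<dots> = measure M W"
    using W assms(1) by (subst finite_measure_eq_sum_singleton) auto
  also have "\<dots> \<le> measure M (space M)"
    by (rule bounded_measure)
  finally have "real (card W) \<le> measure M (space M) / c"
    using assms(3) by (simp add: field_simps)
  then show False
    using W(2) by linarith
qed

context
  fixes f
  assumes f: "f \<in> M \<rightarrow>\<^sub>M M" and inv: "distr M M f = M"
    and singletons: "\<And>x. x \<in> space M \<Longrightarrow> {x} \<in> sets M"
begin

lemma measure_fiber_le: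
  assumes "S \<subseteq> space M" "\<And>y. y \<in> S \<Longrightarrow> f y = f x" "x \<in> space M"
  shows "measure M S \<le> measure M {f x}"
proof -
  have fx: "{f x} \<in> sets M"
    using singletons measurable_space[OF f] assms(3) by blast
  have "measure M S \<le> measure M (f -` {f x} \<inter> space M)"
    using assms measurable_sets[OF f fx] by (intro finite_measure_mono) auto
  also have "\<dots> = measure M {f x}"
    using measure_distr[OF f fx] inv by simp
  finally show ?thesis .
qed

lemma measure_funpow_singleton_mono:
  assumes "z \<in> space M" "i \<le> j"
  shows "measure M {(f ^^ i) z} \<le> measure M {(f ^^ j) z}"
proof -
  have "(f ^^ n) z \<in> space M" for n
    using assms(1) by (induction n) (auto intro: measurable_space[OF f])
  then have "measure M {(f ^^ n) z} \<le> measure M {(f ^^ Suc n) z}" for n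
    using measure_fiber_le[of "{(f ^^ n) z}" "(f ^^ n) z"] by simp
  then show ?thesis
    using lift_Suc_mono_le[of "\<lambda>n. measure M {(f ^^ n) z}", OF _ assms(2)] by blast
qed

lemma measure_two_singletons_le:
  assumes "x \<in> space M" "y \<in> space M" "x \<noteq> y" "f x = f y"
  shows "measure M {x} + measure M {y} \<le> measure M {f x}"
proof -
  have "measure M {x} + measure M {y} = measure M {x, y}"
    using assms singletons by (subst finite_measure_Union[symmetric]) (auto simp: insert_commute)
  also have "\<dots> \<le> measure M {f x}"
    using assms by (intro measure_fiber_le) auto
  finally show ?thesis .
qed

text \<open>The masses of the points of the orbit of an atom never decrease, so the orbit is finite. At its
  first repetition two distinct orbit points would have to merge, and their masses would add up.\<close>

lemma periodic_if_atom_of_invariant: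
  assumes z: "z \<in> space M" and atom: "0 < measure M {z}"
  shows "\<exists>p>0. (f ^^ p) z = z"
proof -
  have orbit_space: "(f ^^ n) z \<in> space M" for n
    using z by (induction n) (auto intro: measurable_space[OF f])
  have "finite (range (\<lambda>n. (f ^^ n) z))"
  proof (rule finite_if_measure_singleton_ge)
    show "{x} \<in> sets M" if "x \<in> range (\<lambda>n. (f ^^ n) z)" for x
      using that orbit_space singletons by auto
    show "measure M {z} \<le> measure M {x}" if "x \<in> range (\<lambda>n. (f ^^ n) z)" for x
      using that measure_funpow_singleton_mono[OF z, of 0] by auto
  qed (rule atom)
  then show ?thesis
  proof (cases rule: funpow_first_repetition)
    case (2 i j)
    then have "measure M {(f ^^ i) z} + measure M {(f ^^ j) z} \<le> measure M {(f ^^ Suc i) z}"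
      using measure_two_singletons_le[OF orbit_space orbit_space] by simp
    also have "\<dots> \<le> measure M {(f ^^ j) z}"
      using 2 by (intro measure_funpow_singleton_mono[OF z]) simp
    finally show ?thesis
      using measure_funpow_singleton_mono[OF z, of 0 i] atom by simp
  qed blast
qed

end

end

lemma emeasure_lborel_preimage_le:
  fixes f :: "real \<Rightarrow> real"
  assumes X: "X \<in> sets borel" and f: "f \<in> restrict_space lborel X \<rightarrow>\<^sub>M restrict_space lborel X"
    and inv: "distr (restrict_space lborel X) (restrict_space lborel X) f = restrict_space lborel X"
    and E: "E \<in> sets borel" "E \<subseteq> X" and S: "S \<subseteq> X" "\<And>y. y \<in> S \<Longrightarrow> f y \<in> E"
  shows "emeasure lborel S \<le> emeasure lborel E"
proof -
  let ?M = "restrict_space lborel X"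
  have E_M: "E \<in> sets ?M"
    using E by (simp add: sets_restrict_space_iff X)
  have "emeasure lborel S \<le> emeasure lborel (f -` E \<inter> X)"
    using S measurable_sets[OF f E_M] X
    by (intro emeasure_mono) (auto simp: sets_restrict_space_iff space_restrict_space)
  also have "\<dots> = emeasure ?M (f -` E \<inter> space ?M)"
    using X by (simp add: emeasure_restrict_space space_restrict_space)
  also have "\<dots> = emeasure ?M E"
    using emeasure_distr[OF f E_M] inv by simp
  also have "\<dots> = emeasure lborel E"
    using E X by (simp add: emeasure_restrict_space)
  finally show ?thesis .
qed

context
  fixes X I :: "real set" and f :: "real \<Rightarrow> real"
  assumes X: "X \<in> sets borel" and f: "f \<in> restrict_space lborel X \<rightarrow>\<^sub>M restrict_space lborel X"
    and inv: "distr (restrict_space lborel X) (restrict_space lborel X) f = restrict_space lborel X"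
    and I: "is_interval I" "I \<subseteq> X" "bdd_below I" "bdd_above I"
    and maps: "\<And>y. y \<in> I \<Longrightarrow> f y \<in> I" and mono: "strict_mono_on I f"
begin

text \<open>With \<open>a = Inf I\<close>, the map sends \<open>(a, x)\<close> into \<open>I \<inter> (-\<infinity>, f x) \<subseteq> [a, f x]\<close>, so comparing
  Lebesgue measures gives \<open>x \<le> f x\<close>; symmetrically with \<open>Sup I\<close>.\<close>

lemma strict_mono_lebesgue_preserving_self_map_ge:
  assumes x: "x \<in> I"
  shows "x \<le> f x"
proof -
  define a where "a = Inf I"
  have a_le: "a \<le> y" if "y \<in> I" for y
    using that I(3) by (auto simp: a_def intro: cInf_lower)
  have "{a<..<x} \<subseteq> I"
  proof
    fix y assume y: "y \<in> {a<..<x}"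
    then obtain u where "u \<in> I" "u < y"
      using cInf_less_iff[of I y] x I(3) by (auto simp: a_def)
    with y x show "y \<in> I"
      using I(1) unfolding is_interval_1 by (meson greaterThanLessThan_iff less_imp_le)
  qed
  moreover have "f y \<in> I \<inter> {..<f x}" if "y \<in> {a<..<x}" "y \<in> I" for y
    using that maps strict_mono_onD[OF mono _ x] by auto
  ultimately have "emeasure lborel {a<..<x} \<le> emeasure lborel (I \<inter> {..<f x})"
    using I real_interval_borel_measurable[OF I(1)]
    by (intro emeasure_lborel_preimage_le[OF X f inv]) auto
  also have "\<dots> \<le> emeasure lborel {a..f x}"
    using a_le by (intro emeasure_mono) auto
  finally show ?thesis
    using a_le[OF x] a_le[OF maps[OF x]] by (simp add: ennreal_le_iff)
qed

lemma strict_mono_lebesgue_preserving_self_map_le: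
  assumes x: "x \<in> I"
  shows "f x \<le> x"
proof -
  define b where "b = Sup I"
  have le_b: "y \<le> b" if "y \<in> I" for y
    using that I(4) by (auto simp: b_def intro: cSup_upper)
  have "{x<..<b} \<subseteq> I"
  proof
    fix y assume y: "y \<in> {x<..<b}"
    then obtain v where "v \<in> I" "y < v"
      using less_cSup_iff[of I y] x I(4) by (auto simp: b_def)
    with y x show "y \<in> I"
      using I(1) unfolding is_interval_1 by (meson greaterThanLessThan_iff less_imp_le)
  qed
  moreover have "f y \<in> I \<inter> {f x<..}" if "y \<in> {x<..<b}" "y \<in> I" for y
    using that maps strict_mono_onD[OF mono x] by auto
  ultimately have "emeasure lborel {x<..<b} \<le> emeasure lborel (I \<inter> {f x<..})"
    using I real_interval_borel_measurable[OF I(1)]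
    by (intro emeasure_lborel_preimage_le[OF X f inv]) auto
  also have "\<dots> \<le> emeasure lborel {f x..b}"
    using le_b by (intro emeasure_mono) auto
  finally show ?thesis
    using le_b[OF x] le_b[OF maps[OF x]] by (simp add: ennreal_le_iff)
qed

lemma strict_mono_lebesgue_preserving_self_map_eq_id: "x \<in> I \<Longrightarrow> f x = x"
  using strict_mono_lebesgue_preserving_self_map_ge strict_mono_lebesgue_preserving_self_map_le
  by (simp add: order.antisym)

end

section \<open>Binary itinerary codes\<close>

definition itinerary_code :: "('a \<Rightarrow> 'a) \<Rightarrow> 'a set \<Rightarrow> 'a \<Rightarrow> real" where
  "itinerary_code T B x = (\<Sum>n. indicator B ((T ^^ n) x) / 2 ^ (n + 1))"

lemma summable_itinerary_code: "summable (\<lambda>n. indicator B ((T ^^ n) x) / 2 ^ (n + 1) :: real)"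
proof (rule summable_comparison_test'[OF sums_summable[OF power_half_series]])
  show "norm (indicator B ((T ^^ n) x) / 2 ^ (n + 1) :: real) \<le> (1 / 2) ^ Suc n" for n
    by (simp add: indicator_def power_one_over)
qed

lemma itinerary_code_nonneg: "0 \<le> itinerary_code T B x"
  unfolding itinerary_code_def by (intro suminf_nonneg summable_itinerary_code) simp

lemma itinerary_code_less_1:
  assumes "(T ^^ k) x \<notin> B"
  shows "itinerary_code T B x < 1"
proof -
  have "0 < (\<Sum>n. (1 / 2) ^ Suc n - indicator B ((T ^^ n) x) / 2 ^ (n + 1) :: real)"
    by (rule suminf_pos2[of _ k], rule summable_diff[OF sums_summable[OF power_half_series]
          summable_itinerary_code])
       (use assms in \<open>auto simp: indicator_def power_one_over\<close>)
  also have "\<dots> = (\<Sum>n. (1 / 2) ^ Suc n) - itinerary_code T B x"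
    unfolding itinerary_code_def
    by (rule suminf_diff[OF sums_summable[OF power_half_series] summable_itinerary_code, symmetric])
  finally show ?thesis
    using sums_unique[OF power_half_series] by simp
qed

lemma itinerary_code_le_1: "itinerary_code T B x \<le> 1"
proof -
  have "itinerary_code T B x \<le> (\<Sum>n. (1 / 2) ^ Suc n)"
    unfolding itinerary_code_def
    by (intro suminf_le summable_itinerary_code sums_summable[OF power_half_series])
       (simp add: indicator_def power_one_over)
  then show ?thesis
    using sums_unique[OF power_half_series] by simp
qed

lemma itinerary_code_funpow:
  "itinerary_code T B x =
     (\<Sum>j<n. indicator B ((T ^^ j) x) / 2 ^ (j + 1)) + itinerary_code T B ((T ^^ n) x) / 2 ^ n"
proof -
  have "itinerary_code T B x =
      (\<Sum>j. indicator B ((T ^^ (j + n)) x) / 2 ^ (j + n + 1)) + (\<Sum>j<n. indicator B ((T ^^ j) x) / 2 ^ (j + 1))"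
    unfolding itinerary_code_def by (rule suminf_split_initial_segment[OF summable_itinerary_code])
  also have "(\<Sum>j. indicator B ((T ^^ (j + n)) x) / 2 ^ (j + n + 1)) = itinerary_code T B ((T ^^ n) x) / 2 ^ n"
    unfolding itinerary_code_def
    by (subst suminf_divide[OF summable_itinerary_code, symmetric])
       (simp add: funpow_add power_add mult_ac)
  finally show ?thesis by simp
qed

lemma itinerary_code_unfold:
  "itinerary_code T B x = indicator B x / 2 + itinerary_code T B (T x) / 2"
  using itinerary_code_funpow[of T B x 1] by simp

lemma E2_itinerary_code:
  assumes "itinerary_code T B (T x) < 1"
  shows "E2 (itinerary_code T B x) = itinerary_code T B (T x)"
proof -
  have "2 * itinerary_code T B x = indicator B x + itinerary_code T B (T x)"
    using itinerary_code_unfold[of T B x] by simp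
  then show ?thesis
    using assms itinerary_code_nonneg[of T B "T x"]
    by (auto simp: E2_def indicator_def frac_eq add.commute[of 1] frac_1_eq)
qed

lemma itinerary_code_dist_le:
  assumes "\<forall>j<n. (T ^^ j) x \<in> B \<longleftrightarrow> (T ^^ j) y \<in> B"
  shows "\<bar>itinerary_code T B x - itinerary_code T B y\<bar> \<le> 1 / 2 ^ n"
proof -
  have "itinerary_code T B x - itinerary_code T B y =
      (itinerary_code T B ((T ^^ n) x) - itinerary_code T B ((T ^^ n) y)) / 2 ^ n"
    using itinerary_code_funpow[of T B x n] itinerary_code_funpow[of T B y n] assms
    by (simp add: indicator_def diff_divide_distrib)
  moreover have "\<bar>itinerary_code T B ((T ^^ n) x) - itinerary_code T B ((T ^^ n) y)\<bar> \<le> 1"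
    using itinerary_code_nonneg itinerary_code_le_1 by (smt (verit))
  ultimately show ?thesis
    by (simp add: abs_divide divide_right_mono)
qed

lemma itinerary_code_less_at_first_difference:
  assumes agree: "\<forall>j<k. (T ^^ j) x \<in> B \<longleftrightarrow> (T ^^ j) y \<in> B"
    and x: "(T ^^ k) x \<notin> B" and y: "(T ^^ k) y \<in> B"
    and tail: "itinerary_code T B ((T ^^ Suc k) x) < 1"
  shows "itinerary_code T B x < itinerary_code T B y"
proof -
  have "itinerary_code T B ((T ^^ k) x) < 1 / 2"
    using itinerary_code_unfold[of T B "(T ^^ k) x"] x tail by simp
  also have "1 / 2 \<le> itinerary_code T B ((T ^^ k) y)"
    using itinerary_code_unfold[of T B "(T ^^ k) y"] y itinerary_code_nonneg[of T B "T ((T ^^ k) y)"]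
    by simp
  finally show ?thesis
    using itinerary_code_funpow[of T B x k] itinerary_code_funpow[of T B y k] agree
    by (simp add: indicator_def divide_strict_right_mono)
qed

lemma finite_itinerary_code_periodic:
  assumes "0 < n"
  shows "finite (itinerary_code T B ` {x. (T ^^ n) x = x})"
proof -
  define code_of :: "nat set \<Rightarrow> real" where
    "code_of D = (\<Sum>j<n. indicator D j / 2 ^ (j + 1)) / (1 - 1 / 2 ^ n)" for D
  have "itinerary_code T B ` {x. (T ^^ n) x = x} \<subseteq> code_of ` Pow {..<n}"
  proof clarify
    fix x assume x: "(T ^^ n) x = x"
    define D where "D = {j. j < n \<and> (T ^^ j) x \<in> B}"
    have "itinerary_code T B x = (\<Sum>j<n. indicator D j / 2 ^ (j + 1)) + itinerary_code T B x / 2 ^ n"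
      using itinerary_code_funpow[of T B x n] x by (simp add: D_def indicator_def)
    moreover have "(1::real) / 2 ^ n < 1"
      using assms by simp
    ultimately have "itinerary_code T B x = code_of D"
      unfolding code_of_def by (simp add: field_simps)
    then show "itinerary_code T B x \<in> code_of ` Pow {..<n}"
      by (auto simp: D_def)
  qed
  then show ?thesis
    by (rule finite_subset) simp
qed

lemma itinerary_code_continuous_at_right:
  fixes x :: "'a::linorder_topology"
  assumes "\<And>n. \<forall>\<^sub>F y in at_right x. \<forall>j<n. (T ^^ j) y \<in> B \<longleftrightarrow> (T ^^ j) x \<in> B"
  shows "continuous (at_right x) (itinerary_code T B)"
  unfolding continuous_within tendsto_iff
proof (intro allI impI)
  fix e :: real assume "0 < e"
  then obtain n where n: "(1 / 2) ^ n < e"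
    using real_arch_pow_inv[of e "1 / 2"] by auto
  show "\<forall>\<^sub>F y in at_right x. dist (itinerary_code T B y) (itinerary_code T B x) < e"
    using assms[of n]
  proof eventually_elim
    case (elim y)
    then show ?case
      using itinerary_code_dist_le[of n T y B x] n by (simp add: dist_real_def power_one_over)
  qed
qed

locale itinerary_order =
  fixes X :: "'a::linorder set" and T :: "'a \<Rightarrow> 'a" and B :: "'a set"
  assumes maps_to: "x \<in> X \<Longrightarrow> T x \<in> X"
    and B_upper: "x \<in> X \<inter> B \<Longrightarrow> y \<in> X \<Longrightarrow> x \<le> y \<Longrightarrow> y \<in> B"
    and strict_mono_on_B: "strict_mono_on (X \<inter> B) T"
    and strict_mono_on_compl_B: "strict_mono_on (X - B) T"
    and leaves_B: "x \<in> X \<Longrightarrow> \<exists>n. (T ^^ n) x \<notin> B"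
    \<comment> \<open>no itinerary ends in all ones, so codes of points of \<open>X\<close> are below 1\<close>
begin

lemma funpow_maps_to: "x \<in> X \<Longrightarrow> (T ^^ n) x \<in> X"
  by (induction n) (auto intro: maps_to)

lemma itinerary_code_less_1_on:
  assumes "x \<in> X"
  shows "itinerary_code T B x < 1"
proof -
  obtain n where "(T ^^ n) x \<notin> B"
    using leaves_B[OF assms] by blast
  then show ?thesis
    by (rule itinerary_code_less_1)
qed

lemma funpow_less_while_itineraries_agree:
  assumes "x \<in> X" "y \<in> X" "x < y" "\<forall>j<n. (T ^^ j) x \<in> B \<longleftrightarrow> (T ^^ j) y \<in> B"
  shows "(T ^^ n) x < (T ^^ n) y"
  using assms(4)
proof (induction n)
  case (Suc n)
  then have less: "(T ^^ n) x < (T ^^ n) y" and same: "(T ^^ n) x \<in> B \<longleftrightarrow> (T ^^ n) y \<in> B"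
    by auto
  have "(T ^^ n) x \<in> X" "(T ^^ n) y \<in> X"
    using funpow_maps_to assms(1,2) by blast+
  then show ?case
    using strict_mono_onD[OF strict_mono_on_B _ _ less] strict_mono_onD[OF strict_mono_on_compl_B _ _ less] same
    by (cases "(T ^^ n) x \<in> B") auto
qed (use assms in simp)

lemma itinerary_code_less_or_orbits_less:
  assumes x: "x \<in> X" and y: "y \<in> X" and "x < y"
  shows "itinerary_code T B x < itinerary_code T B y \<or>
    (itinerary_code T B x = itinerary_code T B y \<and> (\<forall>n. (T ^^ n) x < (T ^^ n) y))"
proof (cases "\<forall>j. (T ^^ j) x \<in> B \<longleftrightarrow> (T ^^ j) y \<in> B")
  case True
  then have "itinerary_code T B x = itinerary_code T B y"
    unfolding itinerary_code_def by (simp add: indicator_def)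
  moreover have "(T ^^ n) x < (T ^^ n) y" for n
    using funpow_less_while_itineraries_agree[OF assms] True by simp
  ultimately show ?thesis
    by blast
next
  case False
  define k where "k = (LEAST j. \<not> ((T ^^ j) x \<in> B \<longleftrightarrow> (T ^^ j) y \<in> B))"
  from False obtain j0 where "\<not> ((T ^^ j0) x \<in> B \<longleftrightarrow> (T ^^ j0) y \<in> B)"
    by blast
  then have differ: "\<not> ((T ^^ k) x \<in> B \<longleftrightarrow> (T ^^ k) y \<in> B)"
    unfolding k_def by (rule LeastI)
  have agree: "\<forall>j<k. (T ^^ j) x \<in> B \<longleftrightarrow> (T ^^ j) y \<in> B"
  proof (intro allI impI)
    fix j assume "j < k"
    from not_less_Least[OF this[unfolded k_def]]
    show "(T ^^ j) x \<in> B \<longleftrightarrow> (T ^^ j) y \<in> B"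
      by simp
  qed
  have "(T ^^ k) x < (T ^^ k) y"
    using funpow_less_while_itineraries_agree[OF assms agree] .
  moreover have "(T ^^ k) x \<in> X" "(T ^^ k) y \<in> X"
    by (simp_all add: funpow_maps_to x y)
  ultimately have "(T ^^ k) x \<in> B \<Longrightarrow> (T ^^ k) y \<in> B"
    by (meson B_upper IntI less_imp_le)
  with differ have "(T ^^ k) x \<notin> B" "(T ^^ k) y \<in> B"
    by auto
  from itinerary_code_less_at_first_difference[OF agree this
      itinerary_code_less_1_on[OF funpow_maps_to[OF x]]]
  show ?thesis
    by simp
qed

lemma mono_on_itinerary_code: "mono_on X (itinerary_code T B)"
proof (rule mono_onI)
  fix x y assume "x \<in> X" "y \<in> X" "x \<le> y"
  then consider "x = y" | "x < y"
    by fastforce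
  then show "itinerary_code T B x \<le> itinerary_code T B y"
    using itinerary_code_less_or_orbits_less[OF \<open>x \<in> X\<close> \<open>y \<in> X\<close>] by cases auto
qed

lemma funpow_less_if_itinerary_code_eq:
  "x \<in> X \<Longrightarrow> y \<in> X \<Longrightarrow> x < y \<Longrightarrow> itinerary_code T B x = itinerary_code T B y \<Longrightarrow>
    (T ^^ n) x < (T ^^ n) y"
  using itinerary_code_less_or_orbits_less[of x y] by auto

end

section \<open>Piecewise translations\<close>

locale piecewise_translation =
  fixes X :: "real set" and n :: nat and a b c :: "nat \<Rightarrow> real" and T :: "real \<Rightarrow> real"
  assumes pieces: "indicator X x = (\<Sum>k<n. indicator {a k..<b k} x :: ennreal)"
    and images: "indicator X x = (\<Sum>k<n. indicator {a k + c k..<b k + c k} x :: ennreal)"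
    and translation: "k < n \<Longrightarrow> x \<in> {a k..<b k} \<Longrightarrow> T x = x + c k"
    and T_borel: "T \<in> borel_measurable borel"
begin

lemma in_piece: "x \<in> X \<longleftrightarrow> (\<exists>k<n. x \<in> {a k..<b k})"
  using pieces by (rule mem_iff_indicator_sum)

lemma in_image: "y \<in> X \<longleftrightarrow> (\<exists>k<n. y \<in> {a k + c k..<b k + c k})"
  using images by (rule mem_iff_indicator_sum)

lemma T_maps_into:
  assumes "x \<in> X"
  shows "T x \<in> X"
proof -
  obtain k where "k < n" "x \<in> {a k..<b k}"
    using assms in_piece by blast
  then show ?thesis
    using in_image translation by fastforce
qed

lemma inj_on_T: "inj_on T X"
proof (rule inj_onI)
  fix x y assume "x \<in> X" "y \<in> X" and eq: "T x = T y"
  then obtain k k' where k: "k < n" "x \<in> {a k..<b k}" and k': "k' < n" "y \<in> {a k'..<b k'}"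
    unfolding in_piece by blast
  have "T x \<in> {a k + c k..<b k + c k}" "T x \<in> {a k' + c k'..<b k' + c k'}"
    using k k' eq translation by auto
  then have "k = k'"
    by (rule eq_if_indicator_sum[OF images k(1) k'(1)])
  then show "x = y"
    using eq translation k k' by simp
qed

lemma X_borel: "X \<in> sets borel"
proof -
  have "X = (\<Union>k<n. {a k..<b k})"
    using in_piece by blast
  then show ?thesis
    by simp
qed

lemma emeasure_preimage:
  assumes [measurable]: "E \<in> sets borel"
  shows "emeasure lborel (T -` E \<inter> X) = emeasure lborel (E \<inter> X)"
proof -
  note [measurable] = T_borel X_borel
  have translate: "(\<integral>\<^sup>+x. indicator E (x + c k) * indicator {a k..<b k} x \<partial>lborel) =
      (\<integral>\<^sup>+y. indicator E y * indicator {a k + c k..<b k + c k} y \<partial>lborel)" for k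
    by (subst nn_integral_real_affine[of _ 1 "c k"]) (auto simp: indicator_def add.commute)
  have "emeasure lborel (T -` E \<inter> X) = (\<integral>\<^sup>+x. indicator (T -` E \<inter> X) x \<partial>lborel)"
    by (rule nn_integral_indicator[symmetric]) measurable
  also have "\<dots> = (\<integral>\<^sup>+x. indicator E (T x) * indicator X x \<partial>lborel)"
    by (intro nn_integral_cong) (simp split: split_indicator)
  also have "\<dots> = (\<integral>\<^sup>+x. (\<Sum>k<n. indicator E (x + c k) * indicator {a k..<b k} x) \<partial>lborel)"
    unfolding pieces sum_distrib_left
    by (intro nn_integral_cong sum.cong refl) (auto simp: indicator_def translation)
  also have "\<dots> = (\<Sum>k<n. \<integral>\<^sup>+x. indicator E (x + c k) * indicator {a k..<b k} x \<partial>lborel)"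
    by (rule nn_integral_sum) measurable
  also have "\<dots> = (\<Sum>k<n. \<integral>\<^sup>+y. indicator E y * indicator {a k + c k..<b k + c k} y \<partial>lborel)"
    by (simp only: translate)
  also have "\<dots> = (\<integral>\<^sup>+y. (\<Sum>k<n. indicator E y * indicator {a k + c k..<b k + c k} y) \<partial>lborel)"
    by (rule nn_integral_sum[symmetric]) measurable
  also have "\<dots> = (\<integral>\<^sup>+y. indicator E y * indicator X y \<partial>lborel)"
    by (simp only: images sum_distrib_left)
  also have "\<dots> = (\<integral>\<^sup>+y. indicator (E \<inter> X) y \<partial>lborel)"
    by (intro nn_integral_cong) (simp split: split_indicator)
  also have "\<dots> = emeasure lborel (E \<inter> X)"
    by (rule nn_integral_indicator) measurable
  finally show ?thesis .
qed

lemma lebesgue_preserving: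
  shows "T \<in> restrict_space lborel X \<rightarrow>\<^sub>M restrict_space lborel X"
    and "distr (restrict_space lborel X) (restrict_space lborel X) T = restrict_space lborel X"
proof -
  let ?M = "restrict_space lborel X"
  show T: "T \<in> ?M \<rightarrow>\<^sub>M ?M"
    using T_borel T_maps_into by (intro measurable_restrict_space3) auto
  show "distr ?M ?M T = ?M"
  proof (rule measure_eqI)
    fix A assume "A \<in> sets (distr ?M ?M T)"
    then have A: "A \<in> sets borel" "A \<subseteq> X"
      using X_borel by (auto simp: sets_restrict_space_iff)
    have "emeasure (distr ?M ?M T) A = emeasure lborel (T -` A \<inter> X)"
      using A X_borel measurable_sets[OF T_borel A(1)]
      by (subst emeasure_distr[OF T]) (auto simp: sets_restrict_space_iff emeasure_restrict_space space_restrict_space)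
    also have "\<dots> = emeasure ?M A"
      using A X_borel by (simp add: emeasure_preimage emeasure_restrict_space Int_absorb2)
    finally show "emeasure (distr ?M ?M T) A = emeasure ?M A" .
  qed simp
qed

lemma eventually_at_right_in_piece:
  assumes "x \<in> X"
  shows "\<exists>k<n. x \<in> {a k..<b k} \<and> (\<forall>\<^sub>F y in at_right x. y \<in> {a k..<b k})"
proof -
  obtain k where k: "k < n" "x \<in> {a k..<b k}"
    using assms in_piece by blast
  then have "\<forall>\<^sub>F y in at_right x. y \<in> {a k..<b k}"
    unfolding eventually_at_right_field by (intro exI[of _ "b k"]) auto
  with k show ?thesis
    by blast
qed

end

section \<open>Deck-shuffler interval exchanges\<close>

locale deck_shuffler =
  fixes m :: nat and l :: "nat \<Rightarrow> real"
  assumes valid: "ds_valid m l"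
begin

abbreviation T where "T \<equiv> ds_T m l"
abbreviation Bs where "Bs \<equiv> ds_Bset m l"
abbreviation H where "H \<equiv> ds_H m l"

text \<open>The piece \<open>[P k, P (k + 1))\<close> is \<open>A\<^sub>k\<^sub>+\<^sub>1\<close> for \<open>k < m\<close> and \<open>B\<^sub>k\<^sub>-\<^sub>m\<^sub>+\<^sub>1\<close> otherwise; \<open>offset k\<close> is the
  translation that \<open>T\<^sub>l\<close> applies on it.\<close>

definition P :: "nat \<Rightarrow> real" where
  "P k = (\<Sum>j<k. l j)"

definition offset :: "nat \<Rightarrow> real" where
  "offset k = (if k < m then \<Sum>j\<in>{m..m + k}. l j else - (\<Sum>j\<in>{k - m..<m}. l j))"

lemma m_pos: "0 < m" and l_pos: "k < 2 * m \<Longrightarrow> 0 < l k" and P_2m: "P (2 * m) = 1"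
  using valid by (auto simp: ds_valid_def P_def)

lemma P_0 [simp]: "P 0 = 0" and P_Suc: "P (Suc k) = P k + l k"
  by (simp_all add: P_def)

lemma P_mono: "i \<le> j \<Longrightarrow> j \<le> 2 * m \<Longrightarrow> P i \<le> P j"
  unfolding P_def by (rule sum_mono2) (auto intro: less_imp_le[OF l_pos])

lemma A_eq: "ds_A m l i = {P i..<P (Suc i)}"
  by (simp add: ds_A_def P_def)

lemma B_eq: "ds_B m l i = {P (m + i)..<P (Suc (m + i))}"
  by (simp add: ds_B_def P_def)

lemma indicator_pieces: "indicator {0..<1} x = (\<Sum>k<2 * m. indicator {P k..<P (Suc k)} x :: ennreal)"
  using Ico_chain_indicator[of "2 * m" P x] P_mono P_2m by simp

lemma piece_unique: "k < 2 * m \<Longrightarrow> k' < 2 * m \<Longrightarrow> x \<in> {P k..<P (Suc k)} \<Longrightarrow> x \<in> {P k'..<P (Suc k')} \<Longrightarrow> k = k'"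
  by (rule eq_if_indicator_sum[OF indicator_pieces])

lemma Bs_eq: "Bs = {P m..<1}"
proof -
  have "Bs = (\<Union>i<m. {P (m + i)..<P (Suc (m + i))})"
    by (simp add: ds_Bset_def B_eq)
  also have "\<dots> = {P (m + 0)..<P (m + m)}"
    using Ico_chain_Union[of m "\<lambda>i. P (m + i)"] P_mono by simp
  finally show ?thesis
    using P_2m by (simp add: mult_2)
qed

lemma piece_in_Bs_iff:
  assumes "k < 2 * m" "x \<in> {P k..<P (Suc k)}"
  shows "x \<in> Bs \<longleftrightarrow> m \<le> k"
proof (cases "m \<le> k")
  case True
  then show ?thesis
    using assms P_mono[of m k] P_mono[of "Suc k" "2 * m"] P_2m by (auto simp: Bs_eq)
next
  case False
  then show ?thesis
    using assms P_mono[of "Suc k" m] by (auto simp: Bs_eq)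
qed

lemma mem_A_iff:
  assumes "k < 2 * m" "x \<in> {P k..<P (Suc k)}" "i < m"
  shows "x \<in> ds_A m l i \<longleftrightarrow> i = k"
proof
  show "x \<in> ds_A m l i \<Longrightarrow> i = k"
    using piece_unique[of i k x] assms unfolding A_eq by linarith
  show "i = k \<Longrightarrow> x \<in> ds_A m l i"
    using assms by (simp add: A_eq)
qed

lemma mem_B_iff:
  assumes "k < 2 * m" "x \<in> {P k..<P (Suc k)}" "i < m"
  shows "x \<in> ds_B m l i \<longleftrightarrow> m + i = k"
proof
  show "x \<in> ds_B m l i \<Longrightarrow> m + i = k"
    using piece_unique[of "m + i" k x] assms unfolding B_eq by linarith
  show "m + i = k \<Longrightarrow> x \<in> ds_B m l i"
    using assms by (simp add: B_eq)
qed

lemma T_piece: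
  assumes k: "k < 2 * m" and x: "x \<in> {P k..<P (Suc k)}"
  shows "T x = x + offset k"
proof -
  have "(\<Sum>i<m. indicator (ds_A m l i) x * (\<Sum>j\<in>{m..m + i}. l j)) =
      (\<Sum>i<m. if i = k then \<Sum>j\<in>{m..m + i}. l j else 0)"
    by (rule sum.cong) (simp_all add: mem_A_iff[OF k x])
  also have "\<dots> = (if k < m then \<Sum>j\<in>{m..m + k}. l j else 0)"
    by (simp add: sum.delta)
  finally have sum_A: "(\<Sum>i<m. indicator (ds_A m l i) x * (\<Sum>j\<in>{m..m + i}. l j)) =
      (if k < m then \<Sum>j\<in>{m..m + k}. l j else 0)" .
  have "(\<Sum>i<m. indicator (ds_B m l i) x * (\<Sum>j\<in>{i..<m}. l j)) =
      (\<Sum>i<m. if i = k - m then (if m \<le> k then \<Sum>j\<in>{i..<m}. l j else 0) else 0)"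
    by (rule sum.cong) (auto simp: mem_B_iff[OF k x])
  also have "\<dots> = (if m \<le> k then \<Sum>j\<in>{k - m..<m}. l j else 0)"
    using k by (simp add: sum.delta)
  finally have sum_B: "(\<Sum>i<m. indicator (ds_B m l i) x * (\<Sum>j\<in>{i..<m}. l j)) =
      (if m \<le> k then \<Sum>j\<in>{k - m..<m}. l j else 0)" .
  show ?thesis
    unfolding ds_T_def sum_A sum_B offset_def by simp
qed

text \<open>\<open>T\<^sub>l\<close> maps \<open>B\<^sub>i\<^sub>+\<^sub>1\<close> onto \<open>[Q i, Q i + l (m + i))\<close> and \<open>A\<^sub>i\<^sub>+\<^sub>1\<close> onto \<open>[Q i + l (m + i), Q (i + 1))\<close>.\<close>

definition Q :: "nat \<Rightarrow> real" where
  "Q i = P i + (\<Sum>j\<in>{m..<m + i}. l j)"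

lemma P_m_plus: "i \<le> m \<Longrightarrow> P (m + i) = P i + (\<Sum>j\<in>{i..<m}. l j) + (\<Sum>j\<in>{m..<m + i}. l j)"
  unfolding P_def lessThan_atLeast0 by (simp add: sum.atLeastLessThan_concat)

lemma image_A: "P k + offset k = Q k + l (m + k)" "P (Suc k) + offset k = Q (Suc k)" if "k < m"
proof -
  have "offset k = (\<Sum>j\<in>{m..<m + k}. l j) + l (m + k)"
    using that by (simp add: offset_def atLeastLessThanSuc_atLeastAtMost[symmetric])
  then show "P k + offset k = Q k + l (m + k)" "P (Suc k) + offset k = Q (Suc k)"
    by (simp_all add: Q_def P_Suc)
qed

lemma image_B: "P (m + i) + offset (m + i) = Q i" "P (Suc (m + i)) + offset (m + i) = Q i + l (m + i)"
  if "i < m"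
  using that P_m_plus[of i] by (simp_all add: offset_def Q_def P_Suc)

lemma Q_0: "Q 0 = 0" and Q_m: "Q m = 1" and Q_Suc: "Q (Suc i) = Q i + l i + l (m + i)"
proof -
  show "Q 0 = 0" "Q (Suc i) = Q i + l i + l (m + i)"
    by (simp_all add: Q_def P_Suc)
  have "Q m = P (m + m)"
    using P_m_plus[of m] by (simp add: Q_def)
  then show "Q m = 1"
    using P_2m by (simp add: mult_2)
qed

lemma indicator_images:
  "indicator {0..<1} y = (\<Sum>k<2 * m. indicator {P k + offset k..<P (Suc k) + offset k} y :: ennreal)"
proof -
  let ?f = "\<lambda>k. indicator {P k + offset k..<P (Suc k) + offset k} y :: ennreal"
  have Q_step: "Q i \<le> Q i + l (m + i)" "Q i + l (m + i) \<le> Q (Suc i)" if "i < m" for i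
    using l_pos[of i] l_pos[of "m + i"] that by (simp_all add: Q_Suc)
  have "(\<Sum>k<2 * m. ?f k) = (\<Sum>i<m. ?f i) + (\<Sum>i<m. ?f (m + i))"
    using sum.atLeastLessThan_concat[of 0 m "2 * m" ?f] sum.shift_bounds_nat_ivl[of ?f 0 m m]
    by (simp add: lessThan_atLeast0 mult_2 add.commute)
  also have "\<dots> = (\<Sum>i<m. indicator {Q i..<Q (Suc i)} y)"
    unfolding sum.distrib[symmetric]
  proof (rule sum.cong)
    fix i assume "i \<in> {..<m}"
    then show "?f i + ?f (m + i) = indicator {Q i..<Q (Suc i)} y"
      using Q_step[of i] by (auto simp: image_A image_B indicator_def)
  qed simp
  also have "\<dots> = indicator {0..<1} y"
    using Ico_chain_indicator[of m Q y] Q_step Q_0 Q_m by force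
  finally show ?thesis ..
qed

lemma T_borel: "T \<in> borel_measurable borel"
  unfolding ds_T_def ds_A_def ds_B_def by measurable

sublocale piecewise_translation "{0..<1}" "2 * m" P "\<lambda>k. P (Suc k)" offset T
  using indicator_pieces indicator_images T_piece T_borel by unfold_locales auto

lemma offset_mono:
  assumes "k \<le> k'" "k' < 2 * m" "k < m \<longleftrightarrow> k' < m"
  shows "offset k \<le> offset k'"
  using assms by (cases "k' < m") (auto simp: offset_def intro!: sum_mono2 less_imp_le[OF l_pos])

lemma piece_index_mono:
  assumes "k < 2 * m" "x \<in> {P k..<P (Suc k)}" "y \<in> {P k'..<P (Suc k')}" "x \<le> y"
  shows "k \<le> k'"
proof (rule ccontr)
  assume "\<not> k \<le> k'"
  then have "P (Suc k') \<le> P k"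
    using assms(1) by (intro P_mono) auto
  then show False
    using assms(2-4) by simp
qed

lemma T_less:
  assumes x: "x \<in> {0..<1}" and y: "y \<in> {0..<1}" and "x < y" and same: "x \<in> Bs \<longleftrightarrow> y \<in> Bs"
  shows "T x < T y"
proof -
  obtain k k' where k: "k < 2 * m" "x \<in> {P k..<P (Suc k)}" and k': "k' < 2 * m" "y \<in> {P k'..<P (Suc k')}"
    using x y in_piece by blast
  have "k \<le> k'"
    using piece_index_mono[OF k k'(2)] \<open>x < y\<close> by simp
  moreover have "k < m \<longleftrightarrow> k' < m"
    using piece_in_Bs_iff[OF k] piece_in_Bs_iff[OF k'] same by linarith
  ultimately have "offset k \<le> offset k'"
    using offset_mono k'(1) by blast
  then show ?thesis
    using T_piece[OF k] T_piece[OF k'] \<open>x < y\<close> by simp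
qed

lemma T_decreasing_on_Bs:
  assumes "x \<in> Bs"
  shows "T x \<le> x - l (m - 1)"
proof -
  have "x \<in> {0..<1}"
    using assms P_mono[of 0 m] by (simp add: Bs_eq)
  then obtain k where k: "k < 2 * m" "x \<in> {P k..<P (Suc k)}"
    using in_piece by blast
  then have "m \<le> k"
    using piece_in_Bs_iff assms by blast
  then have "l (m - 1) \<le> (\<Sum>j\<in>{k - m..<m}. l j)"
    using k(1) m_pos by (intro member_le_sum) (auto intro: less_imp_le[OF l_pos])
  then show ?thesis
    using T_piece[OF k] \<open>m \<le> k\<close> by (simp add: offset_def)
qed

lemma leaves_Bs:
  assumes x: "x \<in> {0..<1}"
  shows "\<exists>n. (T ^^ n) x \<notin> Bs"
proof (rule ccontr)
  assume "\<not> (\<exists>n. (T ^^ n) x \<notin> Bs)"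
  then have in_Bs: "(T ^^ n) x \<in> Bs" for n
    by blast
  define \<delta> where "\<delta> = l (m - 1)"
  have "0 < \<delta>"
    unfolding \<delta>_def using m_pos by (intro l_pos) simp
  have descent: "(T ^^ n) x \<le> x - real n * \<delta>" for n
  proof (induction n)
    case (Suc n)
    then show ?case
      using T_decreasing_on_Bs[OF in_Bs[of n]] by (simp add: \<delta>_def algebra_simps)
  qed simp
  obtain n where "x < real n * \<delta>"
    using reals_Archimedean3[OF \<open>0 < \<delta>\<close>] by blast
  moreover have "0 \<le> (T ^^ n) x"
    using in_Bs[of n] P_mono[of 0 m] by (simp add: Bs_eq)
  ultimately show False
    using descent[of n] by simp
qed

sublocale itinerary_order "{0..<1}" T Bs
proof
  show "x \<in> {0..<1} \<inter> Bs \<Longrightarrow> y \<in> {0..<1} \<Longrightarrow> x \<le> y \<Longrightarrow> y \<in> Bs" for x y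
    by (simp add: Bs_eq)
  show "strict_mono_on ({0..<1} \<inter> Bs) T" "strict_mono_on ({0..<1} - Bs) T"
    by (auto intro!: strict_mono_onI T_less)
  show "x \<in> {0..<1} \<Longrightarrow> T x \<in> {0..<1}" for x
    by (rule T_maps_into)
  show "x \<in> {0..<1} \<Longrightarrow> \<exists>n. (T ^^ n) x \<notin> Bs" for x
    by (rule leaves_Bs)
qed

lemma H_eq_itinerary_code: "H = itinerary_code T Bs"
  by (simp add: fun_eq_iff ds_H_def itinerary_code_def)

lemma T_outside:
  assumes "x \<notin> {0..<1}"
  shows "T x = x"
proof -
  have "x \<notin> ds_A m l i" "x \<notin> ds_B m l i" if "i < m" for i
    using assms in_piece[of x] that by (auto simp: A_eq B_eq)
  then show ?thesis
    unfolding ds_T_def by simp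
qed

lemma H_outside: "x \<notin> {0..<1} \<Longrightarrow> H x = 0"
proof -
  assume x: "x \<notin> {0..<1}"
  then have "(T ^^ n) x = x" for n
    by (induction n) (simp_all add: T_outside)
  moreover have "x \<notin> Bs"
    using x P_mono[of 0 m] by (auto simp: Bs_eq)
  ultimately show ?thesis
    by (simp add: ds_H_def)
qed

lemma E2_H: "E2 (H x) = H (T x)"
proof (cases "x \<in> {0..<1}")
  case True
  then show ?thesis
    unfolding H_eq_itinerary_code by (intro E2_itinerary_code itinerary_code_less_1_on maps_to)
next
  case False
  then show ?thesis
    by (simp add: H_outside T_outside E2_def)
qed

lemma eventually_funpow_at_right:
  assumes x: "x \<in> {0..<1}"
  shows "\<forall>\<^sub>F y in at_right x. (T ^^ n) y = (T ^^ n) x + (y - x) \<and> (\<forall>j<n. (T ^^ j) y \<in> Bs \<longleftrightarrow> (T ^^ j) x \<in> Bs)"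
proof (induction n)
  case (Suc n)
  define p where "p = (T ^^ n) x"
  obtain k where k: "k < 2 * m" "p \<in> {P k..<P (Suc k)}"
    and near: "\<forall>\<^sub>F z in at_right p. z \<in> {P k..<P (Suc k)}"
    using eventually_at_right_in_piece[OF funpow_maps_to[OF x]] unfolding p_def by blast
  from Suc eventually_at_right_translate[OF near, of x]
  show ?case
  proof eventually_elim
    case (elim y)
    then have y_piece: "(T ^^ n) y \<in> {P k..<P (Suc k)}" and IH: "\<forall>j<n. (T ^^ j) y \<in> Bs \<longleftrightarrow> (T ^^ j) x \<in> Bs"
      by (simp_all add: p_def)
    have "(T ^^ Suc n) y = (T ^^ Suc n) x + (y - x)"
      using T_piece[OF k(1) y_piece] T_piece[OF k] elim by (simp add: p_def)
    moreover have "(T ^^ n) y \<in> Bs \<longleftrightarrow> (T ^^ n) x \<in> Bs"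
      using piece_in_Bs_iff[OF k(1) y_piece] piece_in_Bs_iff[OF k] by (simp add: p_def)
    ultimately show ?case
      using IH less_Suc_eq by auto
  qed
qed simp

lemma H_continuous_at_right: "x \<in> {0..<1} \<Longrightarrow> continuous (at_right x) H"
  unfolding H_eq_itinerary_code
  by (rule itinerary_code_continuous_at_right, rule eventually_mono[OF eventually_funpow_at_right]) auto

lemma mono_on_H: "mono_on {0..<1} H"
  unfolding H_eq_itinerary_code by (rule mono_on_itinerary_code)

lemma finite_H_image_if_periodic:
  assumes "0 < n" "\<forall>x\<in>S. (T ^^ n) x = x"
  shows "finite (H ` S)"
proof (rule finite_subset)
  show "H ` S \<subseteq> itinerary_code T Bs ` {x. (T ^^ n) x = x}"
    using assms(2) unfolding H_eq_itinerary_code by auto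
qed (rule finite_itinerary_code_periodic[OF assms(1)])

lemma T_preserves_Leb01: "T \<in> Leb01 \<rightarrow>\<^sub>M Leb01" "distr Leb01 Leb01 T = Leb01"
  unfolding Leb01_def by (fact lebesgue_preserving)+

lemma H_borel: "H \<in> borel_measurable borel"
proof -
  have [measurable]: "(T ^^ n) \<in> borel_measurable borel" for n
    by (rule measurable_compose_n[OF T_borel])
  have [measurable]: "Bs \<in> sets borel"
    by (simp add: Bs_eq)
  show ?thesis
    unfolding ds_H_def by measurable
qed

lemma H_Leb01: "H \<in> Leb01 \<rightarrow>\<^sub>M borel"
  unfolding Leb01_def using H_borel by (intro measurable_restrict_space1) simp

lemma E2_borel: "E2 \<in> borel_measurable borel"
  unfolding E2_def frac_def by measurable

lemma mu_invariant: "distr (ds_mu m l) borel E2 = ds_mu m l"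
  unfolding ds_mu_def using T_preserves_Leb01 H_Leb01 E2_borel E2_H by (rule distr_factor_invariant)

lemma pushforward_invariant:
  assumes sets: "sets \<nu> = sets borel" and inv: "distr \<nu> borel T = \<nu>"
  shows "distr (distr \<nu> borel H) borel E2 = distr \<nu> borel H"
proof (rule distr_factor_invariant)
  show "T \<in> \<nu> \<rightarrow>\<^sub>M \<nu>"
    using T_borel by (simp add: measurable_cong_sets[OF sets sets])
  show "distr \<nu> \<nu> T = \<nu>"
    using inv distr_cong[OF refl sets, where f=T and g=T] by simp
  show "H \<in> \<nu> \<rightarrow>\<^sub>M borel"
    using H_borel by (simp add: measurable_cong_sets[OF sets refl])
qed (simp_all add: E2_borel E2_H)

lemma funpow_E2_H: "(E2 ^^ n) (H x) = H ((T ^^ n) x)"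
  by (induction n) (simp_all add: E2_H)

lemma Leb01_space: "space Leb01 = {0..<1}"
  by (simp add: Leb01_def)

lemma emeasure_mu_singleton: "emeasure (ds_mu m l) {z} = emeasure lborel {x \<in> {0..<1}. H x = z}"
proof -
  have "emeasure (ds_mu m l) {z} = emeasure Leb01 (H -` {z} \<inter> space Leb01)"
    unfolding ds_mu_def by (rule emeasure_distr[OF H_Leb01]) simp
  also have "H -` {z} \<inter> space Leb01 = {x \<in> {0..<1}. H x = z}"
    by (auto simp: Leb01_space)
  also have "emeasure Leb01 \<dots> = emeasure lborel {x \<in> {0..<1}. H x = z}"
    unfolding Leb01_def by (rule emeasure_restrict_space) auto
  finally show ?thesis .
qed

lemma is_interval_level_set_H: "is_interval {x \<in> {0..<1}. H x = z}"
proof (rule is_interval_level_set)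
  show "is_interval {0..<1::real}"
    unfolding is_interval_1 by auto
  show "mono_on {0..<1} H"
    by (rule mono_on_H)
qed

lemma mu_atom_iff:
  "0 < emeasure (ds_mu m l) {z} \<longleftrightarrow> (\<exists>a\<in>{x \<in> {0..<1}. H x = z}. \<exists>b\<in>{x \<in> {0..<1}. H x = z}. a < b)"
  unfolding emeasure_mu_singleton by (rule emeasure_lborel_interval_pos_iff[OF is_interval_level_set_H])

lemma finite_measure_mu: "finite_measure (ds_mu m l)"
proof -
  interpret prob_space Leb01
    unfolding Leb01_def by (rule prob_space_restrict_space) auto
  show ?thesis
    unfolding ds_mu_def by (rule finite_measure_distr[OF H_Leb01])
qed

lemma E2_periodic_if_atom:
  assumes "0 < emeasure (ds_mu m l) {z}"
  shows "\<exists>p>0. (E2 ^^ p) z = z"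
proof -
  interpret finite_measure "ds_mu m l"
    by (rule finite_measure_mu)
  have sets: "sets (ds_mu m l) = sets borel"
    by (simp add: ds_mu_def)
  have E2: "E2 \<in> ds_mu m l \<rightarrow>\<^sub>M ds_mu m l"
    using E2_borel by (simp add: measurable_cong_sets[OF sets sets])
  have inv: "distr (ds_mu m l) (ds_mu m l) E2 = ds_mu m l"
    using mu_invariant distr_cong[OF refl sets, where f=E2 and g=E2] by simp
  have "0 < measure (ds_mu m l) {z}"
    using assms by (simp add: emeasure_eq_measure)
  then show ?thesis
    by (intro periodic_if_atom_of_invariant[OF E2 inv]) (auto simp: sets sets_eq_imp_space_eq[OF sets])
qed

lemma periodic_on_level_set_if_atom:
  assumes "0 < emeasure (ds_mu m l) {z}"
  shows "\<exists>n>0. \<forall>x\<in>{x \<in> {0..<1}. H x = z}. (T ^^ n) x = x"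
proof -
  obtain p where p: "0 < p" "(E2 ^^ p) z = z"
    using E2_periodic_if_atom[OF assms] by blast
  have "(T ^^ p) x = x" if "x \<in> {x \<in> {0..<1}. H x = z}" for x
  proof (rule strict_mono_lebesgue_preserving_self_map_eq_id)
    show "(T ^^ p) \<in> restrict_space lborel {0..<1} \<rightarrow>\<^sub>M restrict_space lborel {0..<1}"
      using measurable_compose_n[OF T_preserves_Leb01(1)] by (simp add: Leb01_def)
    show "distr (restrict_space lborel {0..<1}) (restrict_space lborel {0..<1}) (T ^^ p) =
        restrict_space lborel {0..<1}"
      using distr_funpow_eq[OF T_preserves_Leb01] by (simp add: Leb01_def)
    show "(T ^^ p) y \<in> {x \<in> {0..<1}. H x = z}" if "y \<in> {x \<in> {0..<1}. H x = z}" for y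
      using that funpow_maps_to funpow_E2_H[of p y] p(2) by simp
    show "strict_mono_on {x \<in> {0..<1}. H x = z} (T ^^ p)"
      by (rule strict_mono_onI) (use funpow_less_if_itinerary_code_eq in \<open>auto simp: H_eq_itinerary_code\<close>)
  qed (use that is_interval_level_set_H in \<open>auto intro: bdd_belowI[of _ 0] bdd_aboveI[of _ 1]\<close>)
  then show ?thesis
    using p(1) by blast
qed

lemma finite_orbit_if_periodic:
  assumes x: "x \<in> {0..<1}" and n: "0 < n" and periodic: "(T ^^ n) x = x"
  shows "finite (ds_orbit m l x)"
proof -
  have "ds_orbit m l x \<subseteq> (\<lambda>j. (T ^^ j) x) ` {..<n}"
  proof
    fix y assume "y \<in> ds_orbit m l x"
    then obtain k where y: "y \<in> {0..<1}" "(T ^^ k) x = y \<or> (T ^^ k) y = x"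
      by (auto simp: ds_orbit_def)
    \<comment> \<open>since \<open>x\<close> is periodic, its \<open>k\<close>-th preimage in \<open>[0, 1)\<close> is \<open>T\<^sup>n\<^sup>k\<^sup>-\<^sup>k x\<close>\<close>
    have "k + (n * k - k) = n * k"
      using n by (cases n) simp_all
    have "(T ^^ k) ((T ^^ (n * k - k)) x) = (T ^^ (n * k)) x"
      by (metis \<open>k + (n * k - k) = n * k\<close> comp_apply funpow_add)
    also have "\<dots> = x"
      using funpow_mod_eq[OF periodic, of "n * k"] by simp
    finally have "(T ^^ k) x = y \<or> (T ^^ (n * k - k)) x = y"
      using y inj_onD[OF inj_on_funpow[OF inj_on_T T_maps_into]] funpow_maps_to[OF x] by metis
    then obtain j where "y = (T ^^ j) x"
      by metis
    then have "y = (T ^^ (j mod n)) x"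
      using funpow_mod_eq[OF periodic, of j] by simp
    then show "y \<in> (\<lambda>j. (T ^^ j) x) ` {..<n}"
      using n by simp
  qed
  then show ?thesis
    using finite_subset by blast
qed

lemma not_minimal_if_periodic:
  assumes "x \<in> {0..<1}" "0 < n" "(T ^^ n) x = x"
  shows "\<not> ds_minimal m l"
proof
  assume "ds_minimal m l"
  then have "{0..<1} \<subseteq> closure (ds_orbit m l x)"
    using assms(1) by (simp add: ds_minimal_def)
  also have "\<dots> = ds_orbit m l x"
    using finite_orbit_if_periodic[OF assms] by (simp add: finite_imp_closed closure_closed)
  finally have "finite {0..<1::real}"
    using finite_orbit_if_periodic[OF assms] finite_subset by blast
  then show False
    using infinite_Ico[of 0 "1::real"] by simp
qed

lemma strict_mono_H_if_minimal:
  assumes "ds_minimal m l"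
  shows "strict_mono_on {0..<1} H"
proof (rule strict_mono_onI)
  fix x y :: real assume x: "x \<in> {0..<1}" and y: "y \<in> {0..<1}" and "x < y"
  show "H x < H y"
  proof (rule ccontr)
    assume "\<not> H x < H y"
    then have "H x = H y"
      using itinerary_code_less_or_orbits_less[OF x y \<open>x < y\<close>] by (auto simp: H_eq_itinerary_code)
    with x y have "x \<in> {u \<in> {0..<1}. H u = H x}" "y \<in> {u \<in> {0..<1}. H u = H x}"
      by simp_all
    then have "0 < emeasure (ds_mu m l) {H x}"
      using mu_atom_iff \<open>x < y\<close> by blast
    then obtain n where "0 < n" "(T ^^ n) x = x"
      using periodic_on_level_set_if_atom x by blast
    then show False
      using not_minimal_if_periodic x assms by blast
  qed
qed

end

theorem theorem4:
  fixes m :: nat and l :: "nat \<Rightarrow> real"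
  assumes valid: "ds_valid m l"
  shows
    \<comment> \<open>(a)\<close>
    "(\<forall>x\<in>{0..<1}. E2 (ds_H m l x) = ds_H m l (ds_T m l x))
     \<comment> \<open>(b)\<close>
     \<and> ds_H m l \<in> borel_measurable Leb01
     \<and> distr (ds_mu m l) borel E2 = ds_mu m l
     \<and> (\<forall>\<nu> :: real measure. prob_space \<nu> \<and> sets \<nu> = sets borel \<and> emeasure \<nu> {0..<1} = 1
          \<and> distr \<nu> borel (ds_T m l) = \<nu>
          \<longrightarrow> distr (distr \<nu> borel (ds_H m l)) borel E2 = distr \<nu> borel (ds_H m l))
     \<comment> \<open>(c)\<close>
     \<and> (\<forall>x\<in>{0..<1}. continuous (at_right x) (ds_H m l))
     \<comment> \<open>(d)\<close>
     \<and> mono_on {0..<1} (ds_H m l)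
     \<comment> \<open>(e)\<close>
     \<and> (\<forall>z\<in>{0..<1}.
          let P = {x\<in>{0..<1}. ds_H m l x = z} in
          (emeasure (ds_mu m l) {z} > 0 \<longleftrightarrow> is_interval P \<and> (\<exists>a\<in>P. \<exists>b\<in>P. a < b))
          \<and> (emeasure (ds_mu m l) {z} > 0 \<longrightarrow> (\<exists>n>0. \<forall>x\<in>P. (ds_T m l ^^ n) x = x)))
     \<and> (\<forall>a b. 0 \<le> a \<and> a < b \<and> b < 1 \<and> (\<exists>n>0. \<forall>x\<in>{a..b}. (ds_T m l ^^ n) x = x)
          \<longrightarrow> finite (ds_H m l ` {a..b}))
     \<comment> \<open>(f)\<close>
     \<and> (ds_minimal m l \<longrightarrow> strict_mono_on {0..<1} (ds_H m l) \<and> inj_on (ds_H m l) {0..<1})"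
proof -
  interpret deck_shuffler m l
    by (rule deck_shuffler.intro[OF valid])
  have factor: "\<forall>x\<in>{0..<1}. E2 (H x) = H (T x)"
    using E2_H by simp
  have pushforward: "\<forall>\<nu> :: real measure. prob_space \<nu> \<and> sets \<nu> = sets borel \<and> emeasure \<nu> {0..<1} = 1
      \<and> distr \<nu> borel T = \<nu> \<longrightarrow> distr (distr \<nu> borel H) borel E2 = distr \<nu> borel H"
    using pushforward_invariant by simp
  have continuous: "\<forall>x\<in>{0..<1}. continuous (at_right x) H"
    using H_continuous_at_right by simp
  have atoms: "\<forall>z\<in>{0..<1}. let P = {x\<in>{0..<1}. H x = z} in
      (emeasure (ds_mu m l) {z} > 0 \<longleftrightarrow> is_interval P \<and> (\<exists>a\<in>P. \<exists>b\<in>P. a < b))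
      \<and> (emeasure (ds_mu m l) {z} > 0 \<longrightarrow> (\<exists>n>0. \<forall>x\<in>P. (T ^^ n) x = x))"
    unfolding Let_def using mu_atom_iff is_interval_level_set_H periodic_on_level_set_if_atom by simp
  have finite_image: "\<forall>a b. 0 \<le> a \<and> a < b \<and> b < 1 \<and> (\<exists>n>0. \<forall>x\<in>{a..b}. (T ^^ n) x = x)
      \<longrightarrow> finite (H ` {a..b})"
    using finite_H_image_if_periodic by blast
  have minimal: "ds_minimal m l \<longrightarrow> strict_mono_on {0..<1} H \<and> inj_on H {0..<1}"
    using strict_mono_H_if_minimal strict_mono_on_imp_inj_on by blast
  show ?thesis
    by (intro conjI)
      (rule factor H_Leb01 mu_invariant pushforward continuous mono_on_H atoms finite_image minimal)+
qed

end
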